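(* Let $\mathbb{X}$ be a set, $E\subset\mathbb{R}^{\mathbb{X}}$ a real vector subspace, $C=(E\cap[0,\infty)^{\mathbb{X}})\setminus\{0\}$, and $\Pi:E\to E/\mathcal{R}$ the canonical projection, where $f\mathcal{R}g$ iff $f=bg$ for some $b>0$. For $\bar f,\bar g\in\Pi(C)$ set $d(\bar f,\bar g)=\frac{1-m(f,g)}{1+m(f,g)}$ where $f\in\bar f$, $g\in\bar g$. Then $d$ is well defined (independent of the choice of $f\in\bar f,g\in\bar g$), is a distance on $\Pi(C)$, and satisfies $d\le 1$.
   Context: The order on $\mathbb{R}^{\mathbb{X}}$ is pointwise. For $f,g\in C$, $\aleph(f,g)=\sup\{b\ge0\mid bf\le g\}$ and $m(f,g)=\aleph(f,g)\aleph(g,f)$. *)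

theory Defs
  imports Complex_Main
begin

definition lin_subspace :: "('x \<Rightarrow> real) set \<Rightarrow> bool" where
  "lin_subspace E \<longleftrightarrow> (\<lambda>_. 0) \<in> E \<and>
     (\<forall>f\<in>E. \<forall>g\<in>E. (\<lambda>x. f x + g x) \<in> E) \<and>
     (\<forall>c::real. \<forall>f\<in>E. (\<lambda>x. c * f x) \<in> E)"

definition cone_C :: "('x \<Rightarrow> real) set \<Rightarrow> ('x \<Rightarrow> real) set" where
  "cone_C E = {f \<in> E. (\<forall>x. 0 \<le> f x)} - {(\<lambda>_. 0)}"

definition aleph :: "('x \<Rightarrow> real) \<Rightarrow> ('x \<Rightarrow> real) \<Rightarrow> real" where
  "aleph f g = Sup {b. 0 \<le> b \<and> (\<forall>x. b * f x \<le> g x)}"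

definition mfun :: "('x \<Rightarrow> real) \<Rightarrow> ('x \<Rightarrow> real) \<Rightarrow> real" where
  "mfun f g = aleph f g * aleph g f"

definition relR :: "('x \<Rightarrow> real) \<Rightarrow> ('x \<Rightarrow> real) \<Rightarrow> bool" where
  "relR f g \<longleftrightarrow> (\<exists>b>0. f = (\<lambda>x. b * g x))"

definition proj :: "('x \<Rightarrow> real) set \<Rightarrow> ('x \<Rightarrow> real) \<Rightarrow> ('x \<Rightarrow> real) set" where
  "proj E f = {g \<in> E. relR g f}"

definition drep :: "('x \<Rightarrow> real) \<Rightarrow> ('x \<Rightarrow> real) \<Rightarrow> real" where
  "drep f g = (1 - mfun f g) / (1 + mfun f g)"

definition dist_cls :: "('x \<Rightarrow> real) set \<Rightarrow> ('x \<Rightarrow> real) set \<Rightarrow> real" where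
  "dist_cls F G = drep (SOME f. f \<in> F) (SOME g. g \<in> G)"

definition is_distance :: "'a set \<Rightarrow> ('a \<Rightarrow> 'a \<Rightarrow> real) \<Rightarrow> bool" where
  "is_distance S d \<longleftrightarrow>
     (\<forall>x\<in>S. \<forall>y\<in>S. 0 \<le> d x y) \<and>
     (\<forall>x\<in>S. \<forall>y\<in>S. d x y = 0 \<longleftrightarrow> x = y) \<and>
     (\<forall>x\<in>S. \<forall>y\<in>S. d x y = d y x) \<and>
     (\<forall>x\<in>S. \<forall>y\<in>S. \<forall>z\<in>S. d x z \<le> d x y + d y z)"

end

theory Submission
  imports Defs
begin

text \<open>Scaling f and g by positive factors b and c scales aleph(f,g) by c/b, so
m(f,g) = aleph(f,g) aleph(g,f) only depends on the rays of f and g, which makes d well defined.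
Since aleph(f,g) aleph(g,h) \<le> aleph(f,h), the function m is supermultiplicative,
m(f,g) m(g,h) \<le> m(f,h), and m(f,g) \<le> aleph(f,f) = 1; moreover m(f,g) = 1 forces
g = aleph(f,g) f. The triangle inequality for d then follows from the fact that
t \<mapsto> (1 - t)/(1 + t) is decreasing together with the elementary inequality
(1 - ab)/(1 + ab) \<le> (1 - a)/(1 + a) + (1 - b)/(1 + b) for a, b \<in> [0,1].\<close>

definition semipositive :: "('x \<Rightarrow> real) \<Rightarrow> bool" where
  "semipositive f \<longleftrightarrow> (\<forall>x. 0 \<le> f x) \<and> (\<exists>x. 0 < f x)"

lemma semipositive_nonneg: "semipositive f \<Longrightarrow> 0 \<le> f x"
  unfolding semipositive_def by blast

lemma semipositive_scale: "semipositive f \<Longrightarrow> 0 < b \<Longrightarrow> semipositive (\<lambda>x. b * f x)"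
  unfolding semipositive_def by (auto intro: mult_pos_pos)

lemma semipositive_cone_C: "f \<in> cone_C E \<Longrightarrow> semipositive f"
  unfolding cone_C_def semipositive_def by (auto simp: fun_eq_iff) (metis less_eq_real_def)

lemma
  assumes f: "semipositive f" and g: "\<forall>x. 0 \<le> g x"
  shows aleph_nonneg: "0 \<le> aleph f g"
    and aleph_mult_le: "aleph f g * f x \<le> g x"
    and le_aleph: "0 \<le> b \<Longrightarrow> (\<forall>x. b * f x \<le> g x) \<Longrightarrow> b \<le> aleph f g"
proof -
  let ?S = "{b. 0 \<le> b \<and> (\<forall>x. b * f x \<le> g x)}"
  have "0 \<in> ?S"
    using g by simp
  obtain x0 where "0 < f x0"
    using f unfolding semipositive_def by blast
  then have "\<forall>b\<in>?S. b \<le> g x0 / f x0"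
    by (simp add: pos_le_divide_eq)
  then have bdd: "bdd_above ?S"
    by (auto intro: bdd_aboveI)
  show "0 \<le> aleph f g"
    unfolding aleph_def using \<open>0 \<in> ?S\<close> bdd by (rule cSup_upper)
  show "0 \<le> b \<Longrightarrow> (\<forall>x. b * f x \<le> g x) \<Longrightarrow> b \<le> aleph f g"
    unfolding aleph_def by (rule cSup_upper[OF _ bdd]) simp
  show "aleph f g * f x \<le> g x"
  proof (cases "f x = 0")
    case True
    then show ?thesis using g by simp
  next
    case False
    then have "0 < f x"
      using semipositive_nonneg[OF f, of x] by simp
    moreover have "aleph f g \<le> g x / f x"
      unfolding aleph_def
      by (rule cSup_least) (use \<open>0 \<in> ?S\<close> \<open>0 < f x\<close> in \<open>auto simp: pos_le_divide_eq\<close>)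
    ultimately show ?thesis
      by (simp add: pos_le_divide_eq)
  qed
qed

lemma aleph_scale_ge:
  assumes f: "semipositive f" and g: "\<forall>x. 0 \<le> g x" and "0 < b" "0 < c"
  shows "c / b * aleph f g \<le> aleph (\<lambda>x. b * f x) (\<lambda>x. c * g x)"
proof (rule le_aleph)
  show "semipositive (\<lambda>x. b * f x)" "\<forall>x. 0 \<le> c * g x"
    using assms by (simp_all add: semipositive_scale)
  show "0 \<le> c / b * aleph f g"
    using assms aleph_nonneg[OF f g] by simp
  show "\<forall>x. c / b * aleph f g * (b * f x) \<le> c * g x"
    using \<open>0 < b\<close> \<open>0 < c\<close> aleph_mult_le[OF f g] by simp
qed

lemma aleph_scale:
  assumes f: "semipositive f" and g: "\<forall>x. 0 \<le> g x" and "0 < b" "0 < c"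
  shows "aleph (\<lambda>x. b * f x) (\<lambda>x. c * g x) = c / b * aleph f g"
proof (rule antisym)
  have "(1 / c) / (1 / b) * aleph (\<lambda>x. b * f x) (\<lambda>x. c * g x)
      \<le> aleph (\<lambda>x. 1 / b * (b * f x)) (\<lambda>x. 1 / c * (c * g x))"
    using assms by (intro aleph_scale_ge semipositive_scale) simp_all
  then show "aleph (\<lambda>x. b * f x) (\<lambda>x. c * g x) \<le> c / b * aleph f g"
    using assms by (simp add: field_simps)
  show "c / b * aleph f g \<le> aleph (\<lambda>x. b * f x) (\<lambda>x. c * g x)"
    using assms by (rule aleph_scale_ge)
qed

lemma aleph_mult_le_aleph:
  assumes f: "semipositive f" and g: "semipositive g" and h: "\<forall>x. 0 \<le> h x"
  shows "aleph f g * aleph g h \<le> aleph f h"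
proof (rule le_aleph[OF f h])
  have g': "\<forall>x. 0 \<le> g x"
    using g by (simp add: semipositive_nonneg)
  show "0 \<le> aleph f g * aleph g h"
    using aleph_nonneg[OF f g'] aleph_nonneg[OF g h] by simp
  show "\<forall>x. aleph f g * aleph g h * f x \<le> h x"
  proof
    fix x
    have "aleph g h * (aleph f g * f x) \<le> aleph g h * g x"
      using aleph_mult_le[OF f g'] aleph_nonneg[OF g h] by (rule mult_left_mono)
    also have "\<dots> \<le> h x"
      using aleph_mult_le[OF g h] by (simp add: mult.commute)
    finally show "aleph f g * aleph g h * f x \<le> h x"
      by (simp add: mult_ac)
  qed
qed

lemma mfun_nonneg: "semipositive f \<Longrightarrow> semipositive g \<Longrightarrow> 0 \<le> mfun f g"
  unfolding mfun_def by (simp add: aleph_nonneg semipositive_nonneg)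

lemma mfun_commute: "mfun f g = mfun g f"
  unfolding mfun_def by (rule mult.commute)

lemma mfun_scale:
  assumes "semipositive f" "semipositive g" "0 < b" "0 < c"
  shows "mfun (\<lambda>x. b * f x) (\<lambda>x. c * g x) = mfun f g"
  using assms unfolding mfun_def by (simp add: aleph_scale semipositive_nonneg)

lemma mfun_mult_le:
  assumes f: "semipositive f" and g: "semipositive g" and h: "semipositive h"
  shows "mfun f g * mfun g h \<le> mfun f h"
proof -
  have "aleph f g * aleph g h \<le> aleph f h" "aleph h g * aleph g f \<le> aleph h f"
    using assms by (simp_all add: aleph_mult_le_aleph semipositive_nonneg)
  moreover have "0 \<le> aleph f h" "0 \<le> aleph h g * aleph g f"
    using assms by (simp_all add: aleph_nonneg semipositive_nonneg)
  ultimately have "(aleph f g * aleph g h) * (aleph h g * aleph g f) \<le> aleph f h * aleph h f"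
    by (rule mult_mono)
  then show ?thesis
    unfolding mfun_def by (simp add: mult_ac)
qed

lemma aleph_self:
  assumes f: "semipositive f"
  shows "aleph f f = 1"
proof (rule antisym)
  obtain x0 where "0 < f x0"
    using f unfolding semipositive_def by blast
  moreover have "aleph f f * f x0 \<le> f x0"
    using f by (simp add: aleph_mult_le semipositive_nonneg)
  ultimately show "aleph f f \<le> 1"
    by simp
  show "1 \<le> aleph f f"
    using f by (simp add: le_aleph semipositive_nonneg)
qed

lemma mfun_self: "semipositive f \<Longrightarrow> mfun f f = 1"
  unfolding mfun_def by (simp add: aleph_self)

lemma mfun_le_one: "semipositive f \<Longrightarrow> semipositive g \<Longrightarrow> mfun f g \<le> 1"
  unfolding mfun_def
  by (metis aleph_mult_le_aleph aleph_self semipositive_nonneg)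

lemma mfun_eq_one_imp_relR:
  assumes f: "semipositive f" and g: "semipositive g" and "mfun f g = 1"
  shows "relR g f"
proof -
  have "aleph f g * aleph g f = 1"
    using \<open>mfun f g = 1\<close> unfolding mfun_def .
  moreover have "0 \<le> aleph f g"
    using f g by (simp add: aleph_nonneg semipositive_nonneg)
  ultimately have "0 < aleph f g"
    by (metis less_eq_real_def mult_zero_left zero_neq_one)
  have "g x = aleph f g * f x" for x
  proof (rule antisym)
    have "aleph f g * (aleph g f * g x) \<le> aleph f g * f x"
      using \<open>0 < aleph f g\<close> f g by (simp add: aleph_mult_le semipositive_nonneg)
    then show "g x \<le> aleph f g * f x"
      using \<open>aleph f g * aleph g f = 1\<close> by (simp add: mult.assoc[symmetric])
    show "aleph f g * f x \<le> g x"
      using f g by (simp add: aleph_mult_le semipositive_nonneg)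
  qed
  then show ?thesis
    unfolding relR_def using \<open>0 < aleph f g\<close> by blast
qed

lemma one_minus_div_one_plus_mult_le:
  fixes a b c :: real
  assumes "0 \<le> a" "a \<le> 1" "0 \<le> b" "b \<le> 1" "a * b \<le> c"
  shows "(1 - c) / (1 + c) \<le> (1 - a) / (1 + a) + (1 - b) / (1 + b)"
proof -
  have "0 \<le> a * b"
    using assms by simp
  then have "(1 - c) / (1 + c) \<le> (1 - a * b) / (1 + a * b)"
    using \<open>a * b \<le> c\<close> by (simp add: field_simps)
  also have "\<dots> \<le> (1 - a * b) / ((1 + a) * (1 + b) / 2)"
  proof (rule divide_left_mono)
    have "0 \<le> (1 - a) * (1 - b)"
      using assms by simp
    then show "(1 + a) * (1 + b) / 2 \<le> 1 + a * b"
      by (simp add: algebra_simps)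
    show "0 \<le> 1 - a * b"
      using assms by (simp add: mult_le_one)
    show "0 < (1 + a * b) * ((1 + a) * (1 + b) / 2)"
      using assms by (simp add: add_pos_nonneg)
  qed
  also have "\<dots> = (1 - a) / (1 + a) + (1 - b) / (1 + b)"
    using assms by (simp add: field_simps)
  finally show ?thesis .
qed

lemma drep_commute: "drep f g = drep g f"
  unfolding drep_def by (simp add: mfun_commute)

lemma drep_nonneg: "semipositive f \<Longrightarrow> semipositive g \<Longrightarrow> 0 \<le> drep f g"
  unfolding drep_def by (simp add: mfun_nonneg mfun_le_one add_nonneg_nonneg)

lemma drep_le_one:
  assumes "semipositive f" "semipositive g"
  shows "drep f g \<le> 1"
  using mfun_nonneg[OF assms] unfolding drep_def by (simp add: divide_le_eq_1)

lemma drep_scale: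
  "semipositive f \<Longrightarrow> semipositive g \<Longrightarrow> 0 < b \<Longrightarrow> 0 < c
    \<Longrightarrow> drep (\<lambda>x. b * f x) (\<lambda>x. c * g x) = drep f g"
  unfolding drep_def by (simp add: mfun_scale)

lemma drep_eq_0_iff:
  assumes f: "semipositive f" and g: "semipositive g"
  shows "drep f g = 0 \<longleftrightarrow> relR g f"
proof
  assume "drep f g = 0"
  then have "mfun f g = 1"
    using mfun_nonneg[OF f g] unfolding drep_def by simp
  then show "relR g f"
    using f g by (rule mfun_eq_one_imp_relR[rotated 2])
next
  assume "relR g f"
  then obtain a where "0 < a" and g_eq: "g = (\<lambda>x. a * f x)"
    unfolding relR_def by blast
  have "mfun f g = mfun f f"
    using mfun_scale[OF f f zero_less_one \<open>0 < a\<close>] by (simp add: g_eq)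
  then show "drep f g = 0"
    unfolding drep_def by (simp add: mfun_self[OF f])
qed

lemma drep_triangle:
  assumes "semipositive f" "semipositive g" "semipositive h"
  shows "drep f h \<le> drep f g + drep g h"
  unfolding drep_def using assms
  by (intro one_minus_div_one_plus_mult_le mfun_nonneg mfun_le_one mfun_mult_le)

lemma cone_C_subset: "cone_C E \<subseteq> E"
  unfolding cone_C_def by blast

lemma mem_proj_self: "f \<in> E \<Longrightarrow> f \<in> proj E f"
  unfolding proj_def relR_def by (auto intro: exI[of _ 1])

lemma proj_eq_iff:
  assumes "g \<in> E"
  shows "proj E f = proj E g \<longleftrightarrow> relR g f"
proof
  assume "proj E f = proj E g"
  then show "relR g f"
    using mem_proj_self[OF assms] unfolding proj_def by blast
next
  assume "relR g f"
  then obtain a where "0 < a" and g_eq: "g = (\<lambda>x. a * f x)"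
    unfolding relR_def by blast
  have "relR h f \<longleftrightarrow> relR h g" for h
  proof
    assume "relR h f"
    then obtain b where "0 < b" "h = (\<lambda>x. b * f x)"
      unfolding relR_def by blast
    then have "0 < b / a" "h = (\<lambda>x. b / a * g x)"
      using \<open>0 < a\<close> by (simp_all add: g_eq)
    then show "relR h g"
      unfolding relR_def by blast
  next
    assume "relR h g"
    then obtain b where "0 < b" "h = (\<lambda>x. b * g x)"
      unfolding relR_def by blast
    then have "0 < b * a" "h = (\<lambda>x. b * a * f x)"
      using \<open>0 < a\<close> by (simp_all add: g_eq mult.assoc)
    then show "relR h f"
      unfolding relR_def by blast
  qed
  then show "proj E f = proj E g"
    unfolding proj_def by blast
qed

lemma drep_proj:
  assumes "semipositive f0" "semipositive g0" "f \<in> proj E f0" "g \<in> proj E g0"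
  shows "drep f g = drep f0 g0"
proof -
  obtain b c where "0 < b" "f = (\<lambda>x. b * f0 x)" "0 < c" "g = (\<lambda>x. c * g0 x)"
    using assms(3,4) unfolding proj_def relR_def by blast
  then show ?thesis
    using assms(1,2) by (simp add: drep_scale)
qed

lemma dist_cls_proj:
  assumes f0: "f0 \<in> cone_C E" and g0: "g0 \<in> cone_C E"
    and "f \<in> proj E f0" "g \<in> proj E g0"
  shows "dist_cls (proj E f0) (proj E g0) = drep f g"
proof -
  have sp: "semipositive f0" "semipositive g0"
    using f0 g0 by (simp_all add: semipositive_cone_C)
  have "f0 \<in> proj E f0" "g0 \<in> proj E g0"
    using f0 g0 cone_C_subset by (blast intro: mem_proj_self)+
  then have "(SOME f. f \<in> proj E f0) \<in> proj E f0" "(SOME g. g \<in> proj E g0) \<in> proj E g0"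
    by (metis someI)+
  then have "dist_cls (proj E f0) (proj E g0) = drep f0 g0"
    unfolding dist_cls_def using sp by (rule drep_proj[rotated 2])
  also have "\<dots> = drep f g"
    using drep_proj[OF sp assms(3,4)] by simp
  finally show ?thesis .
qed

lemma dist_cls_proj_cone:
  "f \<in> cone_C E \<Longrightarrow> g \<in> cone_C E \<Longrightarrow> dist_cls (proj E f) (proj E g) = drep f g"
  using cone_C_subset by (blast intro: dist_cls_proj mem_proj_self)

lemma is_distance_proj_cone: "is_distance (proj E ` cone_C E) dist_cls"
proof -
  have "semipositive f" "f \<in> E" if "f \<in> cone_C E" for f
    using that cone_C_subset semipositive_cone_C by blast+
  then show ?thesis
    unfolding is_distance_def
    by (simp add: dist_cls_proj_cone proj_eq_iff drep_eq_0_iff drep_nonneg drep_commute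
        drep_triangle)
qed

theorem mainTheorem2:
  fixes E :: "('x \<Rightarrow> real) set"
  assumes "lin_subspace E"
  shows "(\<forall>F\<in>proj E ` cone_C E. \<forall>G\<in>proj E ` cone_C E. \<forall>f\<in>F. \<forall>g\<in>G.
            dist_cls F G = drep f g)
       \<and> is_distance (proj E ` cone_C E) dist_cls
       \<and> (\<forall>F\<in>proj E ` cone_C E. \<forall>G\<in>proj E ` cone_C E. dist_cls F G \<le> 1)"
proof (intro conjI)
  show "\<forall>F\<in>proj E ` cone_C E. \<forall>G\<in>proj E ` cone_C E. \<forall>f\<in>F. \<forall>g\<in>G.
          dist_cls F G = drep f g"
    by (auto simp: dist_cls_proj)
  show "is_distance (proj E ` cone_C E) dist_cls"
    by (rule is_distance_proj_cone)
  show "\<forall>F\<in>proj E ` cone_C E. \<forall>G\<in>proj E ` cone_C E. dist_cls F G \<le> 1"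
    by (auto simp: dist_cls_proj_cone drep_le_one semipositive_cone_C)
qed

end
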